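(* Let $G\in\mathcal{F}$ and let $C$ be a clique of maximum size in $G$, chosen among all maximum cliques so that the number of edges with exactly one endpoint in $C$ is minimal. Then the vertex set of $C$ can be partitioned into two nonempty subsets $X$ and $Y$ such that for every vertex $v$ not in $C$, the set of neighbors of $v$ in $C$ is equal to $X$, to $Y$, or to $\emptyset$.
   Context: Graphs are finite and simple; spectrum means adjacency spectrum. $\mathcal{F}$ denotes the set of connected graphs whose spectrum consists of exactly one eigenvalue $r>2$, exactly one eigenvalue $s<-1$, and all remaining eigenvalues (with multiplicity) equal to $2$ or $-1$. *)

theory Defs
  imports "Jordan_Normal_Form.Char_Poly"
begin

text \<open>A finite simple graph on vertex set {0..<n} with adjacency relation E
  (only its restriction to {0..<n} matters).\<close>

definition simple_graph :: "nat \<Rightarrow> (nat \<Rightarrow> nat \<Rightarrow> bool) \<Rightarrow> bool" where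
  "simple_graph n E \<longleftrightarrow> (\<forall>u<n. \<forall>v<n. E u v \<longleftrightarrow> E v u) \<and> (\<forall>v<n. \<not> E v v)"

definition adj_mat :: "nat \<Rightarrow> (nat \<Rightarrow> nat \<Rightarrow> bool) \<Rightarrow> real mat" where
  "adj_mat n E = mat n n (\<lambda>(i,j). if E i j then 1 else 0)"

definition connected_graph :: "nat \<Rightarrow> (nat \<Rightarrow> nat \<Rightarrow> bool) \<Rightarrow> bool" where
  "connected_graph n E \<longleftrightarrow> n > 0 \<and>
     (\<forall>u<n. \<forall>v<n. (\<lambda>x y. x < n \<and> y < n \<and> E x y)\<^sup>*\<^sup>* u v)"

text \<open>Spectrum (with multiplicity) = roots of the characteristic polynomial:
  r once, s once, 2 with some multiplicity a, -1 with some multiplicity b.\<close>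
definition in_F :: "nat \<Rightarrow> (nat \<Rightarrow> nat \<Rightarrow> bool) \<Rightarrow> bool" where
  "in_F n E \<longleftrightarrow> simple_graph n E \<and> connected_graph n E \<and>
     (\<exists>r s :: real. \<exists>a b :: nat. r > 2 \<and> s < -1 \<and>
        char_poly (adj_mat n E) = [:-r,1:] * [:-s,1:] * [:-2,1:]^a * [:1,1:]^b)"

definition is_clique :: "nat \<Rightarrow> (nat \<Rightarrow> nat \<Rightarrow> bool) \<Rightarrow> nat set \<Rightarrow> bool" where
  "is_clique n E C \<longleftrightarrow> C \<subseteq> {0..<n} \<and> (\<forall>u\<in>C. \<forall>v\<in>C. u \<noteq> v \<longrightarrow> E u v)"

definition is_max_clique :: "nat \<Rightarrow> (nat \<Rightarrow> nat \<Rightarrow> bool) \<Rightarrow> nat set \<Rightarrow> bool" where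
  "is_max_clique n E C \<longleftrightarrow> is_clique n E C \<and> (\<forall>D. is_clique n E D \<longrightarrow> card D \<le> card C)"

definition boundary_edges :: "nat \<Rightarrow> (nat \<Rightarrow> nat \<Rightarrow> bool) \<Rightarrow> nat set \<Rightarrow> nat" where
  "boundary_edges n E C = card {(u,v). u \<in> C \<and> v \<in> {0..<n} - C \<and> E u v}"

end

theory Submission
  imports Defs "Jordan_Normal_Form.Schur_Decomposition"
begin

text \<open>Let \<open>A\<close> be the adjacency matrix. As the spectrum of \<open>A\<close> is \<open>r, s, 2, \<dots>, 2, -1, \<dots>, -1\<close>,
  the matrix \<open>A + I\<close> has exactly one negative eigenvalue \<open>s + 1\<close>: some vector is negative for
  its quadratic form, but no two negative vectors are orthogonal for it. Instead of the spectral
  theorem we use that \<open>trace (p A)\<close> is determined by the spectrum: hence \<open>A\<close> is annihilated by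
  \<open>(x - r) (x - s) (x - 2) (x + 1)\<close>, the interpolation polynomial of \<open>s\<close> yields a rank-one
  projector \<open>P\<close>, and \<open>A + I\<close> is a sum of squares on the kernel of \<open>P\<close>.

  For the clique \<open>C\<close>, this forbids three five-vertex configurations made of a triangle in \<open>C\<close>
  and two outside vertices, so the neighbourhoods in \<open>C\<close> of outside vertices that are proper and
  nonempty are pairwise equal or complementary. Some outside vertex has a neighbour in \<open>C\<close>, and
  by maximality of \<open>C\<close> no outside vertex is adjacent to all of \<open>C\<close>.\<close>

section \<open>Matrices as entry functions\<close>

text \<open>An \<open>n \<times> n\<close> real matrix is represented by its entry function, zero outside
  \<open>{..<n} \<times> {..<n}\<close>; polynomials in a matrix and quadratic forms then become plain finite sums.\<close>

type_synonym fmat = "nat \<Rightarrow> nat \<Rightarrow> real"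

definition fm_mult :: "nat \<Rightarrow> fmat \<Rightarrow> fmat \<Rightarrow> fmat" where
  "fm_mult n X Y = (\<lambda>i j. if i < n \<and> j < n then (\<Sum>k<n. X i k * Y k j) else 0)"

definition fm_one :: "nat \<Rightarrow> fmat" where
  "fm_one n = (\<lambda>i j. if i < n \<and> j < n \<and> i = j then 1 else 0)"

definition fm_add :: "fmat \<Rightarrow> fmat \<Rightarrow> fmat" where
  "fm_add X Y = (\<lambda>i j. X i j + Y i j)"

definition fm_smult :: "real \<Rightarrow> fmat \<Rightarrow> fmat" where
  "fm_smult c X = (\<lambda>i j. c * X i j)"

definition fm_supported :: "nat \<Rightarrow> fmat \<Rightarrow> bool" where
  "fm_supported n X \<longleftrightarrow> (\<forall>i j. \<not> (i < n \<and> j < n) \<longrightarrow> X i j = 0)"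

definition fm_poly :: "nat \<Rightarrow> fmat \<Rightarrow> real poly \<Rightarrow> fmat" where
  "fm_poly n A p = fold_coeffs (\<lambda>c X. fm_add (fm_smult c (fm_one n)) (fm_mult n A X)) p (\<lambda>i j. 0)"

lemma fm_mult_assoc: "fm_mult n (fm_mult n X Y) Z = fm_mult n X (fm_mult n Y Z)"
proof (intro ext)
  fix i j
  show "fm_mult n (fm_mult n X Y) Z i j = fm_mult n X (fm_mult n Y Z) i j"
  proof (cases "i < n \<and> j < n")
    case True
    have "fm_mult n (fm_mult n X Y) Z i j = (\<Sum>k<n. \<Sum>l<n. X i l * Y l k * Z k j)"
      using True by (simp add: fm_mult_def sum_distrib_right)
    also have "\<dots> = (\<Sum>l<n. \<Sum>k<n. X i l * Y l k * Z k j)"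
      by (rule sum.swap)
    also have "\<dots> = fm_mult n X (fm_mult n Y Z) i j"
      using True by (simp add: fm_mult_def sum_distrib_left mult.assoc)
    finally show ?thesis .
  qed (auto simp: fm_mult_def)
qed

lemma fm_mult_zero_right [simp]: "fm_mult n X (\<lambda>i j. 0) = (\<lambda>i j. 0)"
  and fm_mult_zero_left [simp]: "fm_mult n (\<lambda>i j. 0) X = (\<lambda>i j. 0)"
  by (simp_all add: fm_mult_def fun_eq_iff)

lemma fm_mult_add_right: "fm_mult n X (fm_add Y Z) = fm_add (fm_mult n X Y) (fm_mult n X Z)"
  and fm_mult_add_left: "fm_mult n (fm_add X Y) Z = fm_add (fm_mult n X Z) (fm_mult n Y Z)"
  and fm_mult_smult_right: "fm_mult n X (fm_smult c Y) = fm_smult c (fm_mult n X Y)"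
  and fm_mult_smult_left: "fm_mult n (fm_smult c X) Y = fm_smult c (fm_mult n X Y)"
  by (auto simp: fm_mult_def fm_add_def fm_smult_def algebra_simps sum.distrib sum_distrib_left fun_eq_iff)

lemma fm_add_zero [simp]: "fm_add (\<lambda>i j. 0) X = X" "fm_add X (\<lambda>i j. 0) = X"
  by (simp_all add: fm_add_def)

lemma fm_smult_zero [simp]: "fm_smult 0 X = (\<lambda>i j. 0)" "fm_smult c (\<lambda>i j. 0) = (\<lambda>i j. 0)"
  by (simp_all add: fm_smult_def)

lemma fm_smult_one [simp]: "fm_smult 1 X = X"
  by (simp add: fm_smult_def)

lemma fm_supported_mult [simp]: "fm_supported n (fm_mult n X Y)"
  and fm_supported_one [simp]: "fm_supported n (fm_one n)"
  and fm_supported_zero [simp]: "fm_supported n (\<lambda>i j. 0)"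
  and fm_supported_add [simp]: "fm_supported n X \<Longrightarrow> fm_supported n Y \<Longrightarrow> fm_supported n (fm_add X Y)"
  and fm_supported_smult [simp]: "fm_supported n X \<Longrightarrow> fm_supported n (fm_smult c X)"
  by (simp_all add: fm_supported_def fm_mult_def fm_one_def fm_add_def fm_smult_def)

lemma fm_one_mult: "fm_supported n X \<Longrightarrow> fm_mult n (fm_one n) X = X"
  and fm_mult_one: "fm_supported n X \<Longrightarrow> fm_mult n X (fm_one n) = X"
  by (auto simp: fm_supported_def fm_mult_def fm_one_def if_distrib[of "\<lambda>a. a * _"]
      if_distrib[of "\<lambda>a. _ * a"] sum.delta sum.delta' fun_eq_iff cong: if_cong)

lemma fm_poly_pCons: "fm_poly n A (pCons a p) = fm_add (fm_smult a (fm_one n)) (fm_mult n A (fm_poly n A p))"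
proof (cases "a = 0 \<and> p = 0")
  case False
  then have "coeffs (pCons a p) = a # coeffs p"
    by (auto simp: cCons_def)
  then show ?thesis
    by (simp add: fm_poly_def fold_coeffs_def)
qed (simp add: fm_poly_def)

lemma fm_poly_0 [simp]: "fm_poly n A 0 = (\<lambda>i j. 0)"
  by (simp add: fm_poly_def)

lemma fm_supported_poly [simp]: "fm_supported n (fm_poly n A p)"
  by (induct p) (simp_all add: fm_poly_pCons)

lemma fm_poly_add: "fm_poly n A (p + q) = fm_add (fm_poly n A p) (fm_poly n A q)"
proof (induct p arbitrary: q)
  case (pCons a p)
  show ?case
  proof (cases q)
    case (pCons b q')
    show ?thesis
      unfolding pCons add_pCons fm_poly_pCons pCons.hyps fm_mult_add_right
      by (auto simp: fm_add_def fm_smult_def algebra_simps)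
  qed
qed simp

lemma fm_poly_smult: "fm_poly n A (Polynomial.smult c p) = fm_smult c (fm_poly n A p)"
proof (induct p)
  case (pCons a p)
  show ?case
    unfolding smult_pCons fm_poly_pCons pCons.hyps fm_mult_smult_right
    by (simp add: fm_add_def fm_smult_def algebra_simps)
qed simp

lemma fm_poly_mult: "fm_poly n A (p * q) = fm_mult n (fm_poly n A p) (fm_poly n A q)"
proof (induct p)
  case (pCons a p)
  have "fm_poly n A (pCons a p * q) = fm_poly n A (Polynomial.smult a q + pCons 0 (p * q))"
    by simp
  also have "\<dots> = fm_mult n (fm_poly n A (pCons a p)) (fm_poly n A q)"
    unfolding fm_poly_add fm_poly_smult fm_poly_pCons pCons.hyps
    by (simp add: fm_mult_add_left fm_mult_smult_left fm_mult_assoc fm_one_mult)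
  finally show ?case .
qed simp

lemma fm_poly_const: "fm_poly n A [:c:] = fm_smult c (fm_one n)"
  using fm_poly_pCons[of n A c 0] by simp

lemma fm_poly_linear: "fm_supported n A \<Longrightarrow> fm_poly n A [:c, 1:] = fm_add (fm_smult c (fm_one n)) A"
  using fm_poly_pCons[of n A c "[:1:]"] by (simp add: fm_poly_const fm_mult_one)

lemma fm_poly_commute: "fm_mult n (fm_poly n A p) (fm_poly n A q) = fm_mult n (fm_poly n A q) (fm_poly n A p)"
  by (metis fm_poly_mult mult.commute)

definition fm_transpose :: "fmat \<Rightarrow> fmat" where
  "fm_transpose X = (\<lambda>i j. X j i)"

definition fm_trace :: "nat \<Rightarrow> fmat \<Rightarrow> real" where
  "fm_trace n X = (\<Sum>i<n. X i i)"

definition fm_mult_vec :: "nat \<Rightarrow> fmat \<Rightarrow> (nat \<Rightarrow> real) \<Rightarrow> nat \<Rightarrow> real" where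
  "fm_mult_vec n X x = (\<lambda>i. if i < n then (\<Sum>j<n. X i j * x j) else 0)"

definition dot :: "nat \<Rightarrow> (nat \<Rightarrow> real) \<Rightarrow> (nat \<Rightarrow> real) \<Rightarrow> real" where
  "dot n x y = (\<Sum>i<n. x i * y i)"

definition qform :: "nat \<Rightarrow> fmat \<Rightarrow> (nat \<Rightarrow> real) \<Rightarrow> (nat \<Rightarrow> real) \<Rightarrow> real" where
  "qform n X x y = dot n x (fm_mult_vec n X y)"

lemma fm_transpose_mult: "fm_transpose (fm_mult n X Y) = fm_mult n (fm_transpose Y) (fm_transpose X)"
  by (auto simp: fm_transpose_def fm_mult_def mult.commute fun_eq_iff)

lemma fm_transpose_add: "fm_transpose (fm_add X Y) = fm_add (fm_transpose X) (fm_transpose Y)"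
  and fm_transpose_smult: "fm_transpose (fm_smult c X) = fm_smult c (fm_transpose X)"
  and fm_transpose_one: "fm_transpose (fm_one n) = fm_one n"
  by (auto simp: fm_transpose_def fm_add_def fm_smult_def fm_one_def fun_eq_iff)

lemma fm_transpose_poly:
  assumes "fm_supported n A" "fm_transpose A = A"
  shows "fm_transpose (fm_poly n A p) = fm_poly n A p"
proof (induct p)
  case (pCons a p)
  have "fm_mult n (fm_poly n A p) A = fm_mult n A (fm_poly n A p)"
    using fm_poly_commute[of n A p "[:0, 1:]"] fm_poly_linear[OF assms(1), of 0] by simp
  then show ?case
    unfolding fm_poly_pCons fm_transpose_add fm_transpose_smult fm_transpose_one fm_transpose_mult
      pCons.hyps assms(2) by simp
qed (simp add: fm_transpose_def)

lemma fm_symmetric_entry: "fm_transpose X = X \<Longrightarrow> X j i = X i j"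
  by (metis fm_transpose_def)

lemma fm_trace_mult_commute: "fm_trace n (fm_mult n X Y) = fm_trace n (fm_mult n Y X)"
proof -
  have "fm_trace n (fm_mult n X Y) = (\<Sum>i<n. \<Sum>k<n. X i k * Y k i)"
    by (simp add: fm_trace_def fm_mult_def)
  also have "\<dots> = (\<Sum>k<n. \<Sum>i<n. X i k * Y k i)"
    by (rule sum.swap)
  also have "\<dots> = fm_trace n (fm_mult n Y X)"
    by (simp add: fm_trace_def fm_mult_def mult.commute)
  finally show ?thesis .
qed

lemma sum_sum_nonneg_eq_0:
  fixes G :: "nat \<Rightarrow> nat \<Rightarrow> real"
  assumes "(\<Sum>i<n. \<Sum>k<n. G i k) = 0" "\<And>i k. i < n \<Longrightarrow> k < n \<Longrightarrow> G i k \<ge> 0" "i < n" "k < n"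
  shows "G i k = 0"
proof -
  have "\<forall>i\<in>{..<n}. (\<Sum>k<n. G i k) = 0"
    using assms(1,2) by (subst sum_nonneg_eq_0_iff[symmetric]) (auto intro: sum_nonneg)
  then have "\<forall>k\<in>{..<n}. G i k = 0"
    using assms(2,3) by (subst sum_nonneg_eq_0_iff[symmetric]) auto
  with assms(4) show ?thesis
    by simp
qed

lemma fm_trace_square_eq_0:
  assumes "fm_supported n X" "fm_transpose X = X" "fm_trace n (fm_mult n X X) = 0"
  shows "X = (\<lambda>i j. 0)"
proof -
  have "fm_trace n (fm_mult n X X) = (\<Sum>i<n. \<Sum>k<n. (X i k)\<^sup>2)"
    by (simp add: fm_trace_def fm_mult_def power2_eq_square fm_symmetric_entry[OF assms(2)])
  then have "(X i k)\<^sup>2 = 0" if "i < n" "k < n" for i k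
    using sum_sum_nonneg_eq_0[of "\<lambda>i k. (X i k)\<^sup>2" n i k] assms(3) that by simp
  with assms(1) show ?thesis
    by (auto simp: fm_supported_def fun_eq_iff)
qed

lemma fm_mult_vec_mult: "fm_mult_vec n (fm_mult n X Y) x = fm_mult_vec n X (fm_mult_vec n Y x)"
proof
  fix i
  show "fm_mult_vec n (fm_mult n X Y) x i = fm_mult_vec n X (fm_mult_vec n Y x) i"
  proof (cases "i < n")
    case True
    have "fm_mult_vec n (fm_mult n X Y) x i = (\<Sum>j<n. \<Sum>k<n. X i k * Y k j * x j)"
      using True by (simp add: fm_mult_vec_def fm_mult_def sum_distrib_right)
    also have "\<dots> = (\<Sum>k<n. \<Sum>j<n. X i k * Y k j * x j)"
      by (rule sum.swap)
    also have "\<dots> = fm_mult_vec n X (fm_mult_vec n Y x) i"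
      using True by (simp add: fm_mult_vec_def sum_distrib_left mult.assoc)
    finally show ?thesis .
  qed (simp add: fm_mult_vec_def)
qed

lemma dot_mult_vec_symmetric:
  assumes "fm_transpose X = X"
  shows "dot n x (fm_mult_vec n X y) = dot n (fm_mult_vec n X x) y"
proof -
  have "dot n x (fm_mult_vec n X y) = (\<Sum>i<n. \<Sum>j<n. x i * X i j * y j)"
    by (simp add: dot_def fm_mult_vec_def sum_distrib_left mult.assoc)
  also have "\<dots> = (\<Sum>j<n. \<Sum>i<n. X j i * x i * y j)"
    by (subst sum.swap) (simp add: fm_symmetric_entry[OF assms] mult_ac)
  also have "\<dots> = dot n (fm_mult_vec n X x) y"
    by (simp add: dot_def fm_mult_vec_def sum_distrib_right)
  finally show ?thesis .
qed

lemma qform_commute: "fm_transpose X = X \<Longrightarrow> qform n X x y = qform n X y x"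
  unfolding qform_def by (subst dot_mult_vec_symmetric) (simp_all add: dot_def mult.commute)

lemma qform_add: "qform n (fm_add X Y) x y = qform n X x y + qform n Y x y"
  and qform_smult: "qform n (fm_smult c X) x y = c * qform n X x y"
  by (simp_all add: qform_def dot_def fm_mult_vec_def fm_add_def fm_smult_def algebra_simps
      sum.distrib sum_distrib_left)

lemma qform_one: "qform n (fm_one n) x y = dot n x y"
  by (simp add: qform_def dot_def fm_mult_vec_def fm_one_def if_distrib[of "\<lambda>a. a * _"] sum.delta
      cong: if_cong)

lemma qform_linear_combination:
  assumes "fm_transpose X = X"
  shows "qform n X (\<lambda>i. a * x i + b * y i) (\<lambda>i. a * x i + b * y i)
     = a\<^sup>2 * qform n X x x + 2 * a * b * qform n X x y + b\<^sup>2 * qform n X y y"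
proof -
  have "qform n X (\<lambda>i. a * x i + b * y i) (\<lambda>i. a * x i + b * y i)
     = a * a * qform n X x x + a * b * qform n X x y + a * b * qform n X y x + b * b * qform n X y y"
    by (simp add: qform_def dot_def fm_mult_vec_def algebra_simps sum.distrib sum_distrib_left)
  then show ?thesis
    using qform_commute[OF assms, of n x y] by (simp add: power2_eq_square)
qed

lemma qform_square_nonneg:
  assumes "fm_transpose P = P"
  shows "qform n (fm_mult n P P) z z \<ge> 0"
proof -
  have "qform n (fm_mult n P P) z z = dot n (fm_mult_vec n P z) (fm_mult_vec n P z)"
    unfolding qform_def fm_mult_vec_mult by (rule dot_mult_vec_symmetric[OF assms])
  then show ?thesis
    by (simp add: dot_def sum_nonneg)
qed

section \<open>Traces of polynomials in a triangularizable matrix\<close>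

definition fm_upper_triangular :: "fmat \<Rightarrow> bool" where
  "fm_upper_triangular B \<longleftrightarrow> (\<forall>i j. j < i \<longrightarrow> B i j = 0)"

lemma fm_poly_upper_triangular:
  assumes "fm_upper_triangular B"
  shows "fm_upper_triangular (fm_poly n B p) \<and> (\<forall>i<n. fm_poly n B p i i = poly p (B i i))"
proof (induct p)
  case (pCons a p)
  let ?P = "fm_poly n B p"
  have ut: "fm_upper_triangular ?P" and diag: "\<forall>i<n. ?P i i = poly p (B i i)"
    using pCons.hyps by auto
  have "(\<Sum>k<n. B i k * ?P k j) = 0" if "j < i" for i j
  proof (rule sum.neutral, rule ballI)
    fix k
    show "B i k * ?P k j = 0"
      using assms ut that unfolding fm_upper_triangular_def by (cases "k < i") auto
  qed
  then have "fm_upper_triangular (fm_poly n B (pCons a p))"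
    by (simp add: fm_poly_pCons fm_upper_triangular_def fm_add_def fm_smult_def fm_one_def fm_mult_def)
  moreover have "fm_poly n B (pCons a p) i i = poly (pCons a p) (B i i)" if "i < n" for i
  proof -
    have "(\<Sum>k<n. B i k * ?P k i) = (\<Sum>k<n. if k = i then B i i * ?P i i else 0)"
      by (rule sum.cong)
        (use assms ut in \<open>auto simp: fm_upper_triangular_def linorder_neq_iff\<close>)
    then show ?thesis
      using that diag by (simp add: fm_poly_pCons fm_add_def fm_smult_def fm_one_def fm_mult_def)
  qed
  ultimately show ?case
    by blast
qed (simp add: fm_upper_triangular_def)

lemma fm_poly_similar:
  assumes "fm_supported n B" "fm_supported n P" "fm_supported n Q"
    and "fm_mult n P Q = fm_one n" "fm_mult n Q P = fm_one n"
  shows "fm_poly n (fm_mult n (fm_mult n P B) Q) p = fm_mult n (fm_mult n P (fm_poly n B p)) Q"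
proof (induct p)
  case (pCons a p)
  have QP: "fm_mult n Q (fm_mult n P Z) = Z" if "fm_supported n Z" for Z
    using that by (simp add: fm_mult_assoc[symmetric] assms fm_one_mult)
  show ?case
    unfolding fm_poly_pCons pCons.hyps
    by (simp add: fm_mult_add_left fm_mult_add_right fm_mult_smult_left fm_mult_smult_right
        fm_mult_assoc QP fm_one_mult assms(4)[unfolded fm_mult_assoc] assms)
qed simp

lemma fm_trace_poly_triangular:
  assumes "fm_supported n B" "fm_supported n P" "fm_supported n Q"
    and "fm_mult n P Q = fm_one n" "fm_mult n Q P = fm_one n" "fm_upper_triangular B"
  shows "fm_trace n (fm_poly n (fm_mult n (fm_mult n P B) Q) p) = (\<Sum>i<n. poly p (B i i))"
proof -
  have "fm_trace n (fm_mult n (fm_mult n P (fm_poly n B p)) Q)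
      = fm_trace n (fm_mult n Q (fm_mult n P (fm_poly n B p)))"
    by (rule fm_trace_mult_commute)
  also have "\<dots> = fm_trace n (fm_poly n B p)"
    by (simp add: fm_mult_assoc[symmetric] assms(5) fm_one_mult)
  finally show ?thesis
    using fm_poly_upper_triangular[OF assms(6), of n p]
    by (simp add: fm_poly_similar[OF assms(1-5)] fm_trace_def)
qed

definition fm_of_mat :: "nat \<Rightarrow> real mat \<Rightarrow> fmat" where
  "fm_of_mat n X = (\<lambda>i j. if i < n \<and> j < n then X $$ (i, j) else 0)"

lemma fm_supported_of_mat [simp]: "fm_supported n (fm_of_mat n X)"
  by (simp add: fm_supported_def fm_of_mat_def)

lemma fm_of_mat_mult:
  assumes "X \<in> carrier_mat n n" "Y \<in> carrier_mat n n"
  shows "fm_of_mat n (X * Y) = fm_mult n (fm_of_mat n X) (fm_of_mat n Y)"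
  using assms by (auto simp: fm_of_mat_def fm_mult_def scalar_prod_def atLeast0LessThan fun_eq_iff
      intro!: sum.cong)

lemma fm_of_mat_one: "fm_of_mat n (1\<^sub>m n) = fm_one n"
  by (auto simp: fm_of_mat_def fm_one_def fun_eq_iff)

lemma fm_trace_poly_char_poly:
  fixes A :: "real mat"
  assumes A: "A \<in> carrier_mat n n" and cp: "char_poly A = (\<Prod>e\<leftarrow>es. [:-e, 1:])"
  shows "fm_trace n (fm_poly n (fm_of_mat n A) p) = (\<Sum>e\<leftarrow>es. poly p e)"
proof -
  obtain B P Q where "schur_decomposition A es = (B, P, Q)"
    by (cases "schur_decomposition A es")
  with schur_decomposition[OF A cp] have wit: "similar_mat_wit A B P Q"
    and ut: "upper_triangular B" and diag: "diag_mat B = es"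
    by auto
  from wit A have B: "B \<in> carrier_mat n n" and P: "P \<in> carrier_mat n n" and Q: "Q \<in> carrier_mat n n"
    and PQ: "P * Q = 1\<^sub>m n" and QP: "Q * P = 1\<^sub>m n" and APBQ: "A = P * B * Q"
    unfolding similar_mat_wit_def Let_def by auto
  have "fm_of_mat n A = fm_mult n (fm_mult n (fm_of_mat n P) (fm_of_mat n B)) (fm_of_mat n Q)"
    using P B Q by (simp add: APBQ fm_of_mat_mult fm_mult_assoc)
  moreover have "fm_upper_triangular (fm_of_mat n B)"
    using ut B by (auto simp: fm_upper_triangular_def upper_triangular_def fm_of_mat_def)
  moreover have "fm_mult n (fm_of_mat n P) (fm_of_mat n Q) = fm_one n"
    and "fm_mult n (fm_of_mat n Q) (fm_of_mat n P) = fm_one n"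
    using fm_of_mat_mult[OF P Q] fm_of_mat_mult[OF Q P] PQ QP by (simp_all add: fm_of_mat_one)
  ultimately have "fm_trace n (fm_poly n (fm_of_mat n A) p) = (\<Sum>i<n. poly p (fm_of_mat n B i i))"
    by (simp add: fm_trace_poly_triangular)
  also have "\<dots> = (\<Sum>i<n. poly p (B $$ (i, i)))"
    by (simp add: fm_of_mat_def)
  also have "\<dots> = (\<Sum>e\<leftarrow>diag_mat B. poly p e)"
    using B by (simp add: diag_mat_def sum_list_sum_nth atLeast0LessThan)
  finally show ?thesis
    unfolding diag .
qed

section \<open>Quadratic forms with one negative direction\<close>

lemma sum_squared_minors:
  fixes x y :: "nat \<Rightarrow> real"
  shows "(\<Sum>j<n. \<Sum>l<n. (x j * y l - x l * y j)\<^sup>2) =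
     2 * ((\<Sum>j<n. (x j)\<^sup>2) * (\<Sum>l<n. (y l)\<^sup>2) - (\<Sum>j<n. x j * y j)\<^sup>2)"
proof -
  have "(\<Sum>j<n. \<Sum>l<n. (x j * y l - x l * y j)\<^sup>2) =
     (\<Sum>j<n. \<Sum>l<n. (x j)\<^sup>2 * (y l)\<^sup>2) + (\<Sum>j<n. \<Sum>l<n. (x l)\<^sup>2 * (y j)\<^sup>2)
      - 2 * (\<Sum>j<n. \<Sum>l<n. (x j * y j) * (x l * y l))"
    by (simp add: power2_eq_square algebra_simps sum.distrib sum_subtractf sum_distrib_left)
  also have "(\<Sum>j<n. \<Sum>l<n. (x l)\<^sup>2 * (y j)\<^sup>2) = (\<Sum>j<n. \<Sum>l<n. (x j)\<^sup>2 * (y l)\<^sup>2)"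
    by (subst sum.swap) simp
  finally show ?thesis
    by (simp add: power2_eq_square sum_product algebra_simps)
qed

text \<open>A symmetric idempotent of trace one has rank one: its Gram determinants
  \<open>E i i * E k k - (E i k)\<^sup>2\<close> are nonnegative by Lagrange's identity and sum to
  \<open>(trace E)\<^sup>2 - trace (E * E) = 0\<close>.\<close>

lemma fm_idempotent_trace_one_minors:
  assumes sym: "fm_transpose E = E" and idem: "fm_mult n E E = E" and trace: "fm_trace n E = 1"
    and "i < n" "j < n" "k < n" "l < n"
  shows "E i j * E k l = E i l * E k j"
proof -
  have row: "(\<Sum>j<n. E i j * E k j) = E i k" if "i < n" "k < n" for i k
    using fun_cong[OF fun_cong[OF idem, of i], of k] that
    by (simp add: fm_mult_def fm_symmetric_entry[OF sym, of _ k])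
  have minors: "(\<Sum>j<n. \<Sum>l<n. (E i j * E k l - E i l * E k j)\<^sup>2) = 2 * (E i i * E k k - (E i k)\<^sup>2)"
    if "i < n" "k < n" for i k
    unfolding sum_squared_minors using row[OF that(1) that(1)] row[OF that(2) that(2)] row[OF that]
    by (simp add: power2_eq_square)
  have gram_nonneg: "E i i * E k k - (E i k)\<^sup>2 \<ge> 0" if "i < n" "k < n" for i k
    using minors[OF that] sum_nonneg[of "{..<n}" "\<lambda>j. \<Sum>l<n. (E i j * E k l - E i l * E k j)\<^sup>2"]
    by (simp add: sum_nonneg)
  have "(\<Sum>i<n. \<Sum>k<n. E i i * E k k - (E i k)\<^sup>2)
      = (fm_trace n E)\<^sup>2 - fm_trace n (fm_mult n E E)"
    by (simp add: fm_trace_def fm_mult_def power2_eq_square sum_subtractf sum_product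
        fm_symmetric_entry[OF sym, of _ k for k])
  then have "(\<Sum>i<n. \<Sum>k<n. E i i * E k k - (E i k)\<^sup>2) = 0"
    by (simp add: idem trace)
  then have "E i i * E k k - (E i k)\<^sup>2 = 0"
    using gram_nonneg \<open>i < n\<close> \<open>k < n\<close> by (rule sum_sum_nonneg_eq_0)
  then have "(\<Sum>j<n. \<Sum>l<n. (E i j * E k l - E i l * E k j)\<^sup>2) = 0"
    using minors \<open>i < n\<close> \<open>k < n\<close> by simp
  then show ?thesis
    using \<open>j < n\<close> \<open>l < n\<close> by (auto dest: sum_sum_nonneg_eq_0)
qed

text \<open>As \<open>P\<close> has rank one, \<open>z = (P y)\<^sub>j x - (P x)\<^sub>j y\<close> lies in the kernel of \<open>P\<close>; for an
  \<open>M\<close>-orthogonal pair of negative vectors \<open>x, y\<close>, the value \<open>qform M z z\<close> would be negative.\<close>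

lemma no_orthogonal_negative_pair:
  assumes sym: "fm_transpose M = M"
    and rank_one: "\<And>i j k l. i < n \<Longrightarrow> j < n \<Longrightarrow> k < n \<Longrightarrow> l < n \<Longrightarrow> P i j * P k l = P i l * P k j"
    and kernel_nonneg: "\<And>z. fm_mult_vec n P z = (\<lambda>i. 0) \<Longrightarrow> qform n M z z \<ge> 0"
    and x: "qform n M x x < 0" and y: "qform n M y y < 0"
  shows "qform n M x y \<noteq> 0"
proof
  assume orth: "qform n M x y = 0"
  define u where "u = fm_mult_vec n P x"
  define v where "v = fm_mult_vec n P y"
  have parallel: "u i * v j = u j * v i" if "i < n" "j < n" for i j
  proof -
    have "u i * v j = (\<Sum>k<n. \<Sum>l<n. P i k * P j l * x k * y l)"
      using that by (simp add: u_def v_def fm_mult_vec_def sum_product algebra_simps)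
    also have "\<dots> = (\<Sum>k<n. \<Sum>l<n. P j k * P i l * x k * y l)"
      by (intro sum.cong refl) (metis rank_one that mult.commute lessThan_iff)
    also have "\<dots> = u j * v i"
      using that by (simp add: u_def v_def fm_mult_vec_def sum_product algebra_simps)
    finally show ?thesis .
  qed
  show False
  proof (cases "\<forall>j<n. v j = 0")
    case True
    then have "fm_mult_vec n P y = (\<lambda>i. 0)"
      by (auto simp: v_def fm_mult_vec_def fun_eq_iff)
    with kernel_nonneg y show False
      by fastforce
  next
    case False
    then obtain j where j: "j < n" "v j \<noteq> 0"
      by blast
    define z where "z = (\<lambda>i. v j * x i + (- u j) * y i)"
    have "fm_mult_vec n P z i = v j * u i - u j * v i" for i
    proof (cases "i < n")
      case True
      then have "fm_mult_vec n P z i = v j * (\<Sum>k<n. P i k * x k) - u j * (\<Sum>k<n. P i k * y k)"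
        by (simp add: z_def fm_mult_vec_def algebra_simps sum.distrib sum_distrib_left sum_subtractf)
      with True show ?thesis
        by (simp add: u_def v_def fm_mult_vec_def)
    qed (simp add: fm_mult_vec_def u_def v_def)
    then have "fm_mult_vec n P z = (\<lambda>i. v j * u i - u j * v i)"
      by blast
    also have "\<dots> = (\<lambda>i. 0)"
    proof
      fix i
      have "u i = 0 \<and> v i = 0" if "\<not> i < n"
        using that by (simp add: u_def v_def fm_mult_vec_def)
      then show "v j * u i - u j * v i = 0"
        using parallel[of i j] j(1) by (cases "i < n") (auto simp: mult.commute)
    qed
    finally have "qform n M z z \<ge> 0"
      by (rule kernel_nonneg)
    moreover have "qform n M z z = (v j)\<^sup>2 * qform n M x x + (u j)\<^sup>2 * qform n M y y"
      unfolding z_def qform_linear_combination[OF sym] using orth by simp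
    moreover have "(v j)\<^sup>2 * qform n M x x < 0"
      using j x by (simp add: mult_pos_neg)
    moreover have "(u j)\<^sup>2 * qform n M y y \<le> 0"
      using y by (simp add: mult_nonneg_nonpos)
    ultimately show False
      by linarith
  qed
qed

definition negative_index_one :: "nat \<Rightarrow> fmat \<Rightarrow> bool" where
  "negative_index_one n M \<longleftrightarrow> (\<exists>w. qform n M w w < 0) \<and>
     (\<forall>x y. qform n M x x < 0 \<longrightarrow> qform n M y y < 0 \<longrightarrow> qform n M x y \<noteq> 0)"

section \<open>Polynomials in a symmetric matrix with the spectrum of the class F\<close>

lemma three_roots_dvd:
  fixes D :: "real poly"
  assumes "poly D x = 0" "poly D y = 0" "poly D z = 0" "x \<noteq> y" "x \<noteq> z" "y \<noteq> z"
  shows "[:-x, 1:] * [:-y, 1:] * [:-z, 1:] dvd D"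
proof -
  obtain D1 where D1: "D = [:-x, 1:] * D1"
    using assms(1) by (metis dvd_def dvd_iff_poly_eq_0 minus_minus)
  then have "poly D1 y = 0"
    using assms(2,4) by simp
  then obtain D2 where D2: "D1 = [:-y, 1:] * D2"
    by (metis dvd_def dvd_iff_poly_eq_0 minus_minus)
  then have "poly D2 z = 0"
    using assms(3,5,6) D1 by simp
  then obtain D3 where "D2 = [:-z, 1:] * D3"
    by (metis dvd_def dvd_iff_poly_eq_0 minus_minus)
  with D1 D2 show ?thesis
    unfolding dvd_def by (metis mult.assoc)
qed

text \<open>The spectrum enters only through the traces of polynomials in \<open>A\<close>, which
  \<open>fm_trace_poly_char_poly\<close> computes from the characteristic polynomial.\<close>

locale F_spectrum =
  fixes n :: nat and A :: fmat and r s :: real and a b :: nat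
  assumes supported: "fm_supported n A"
    and symmetric: "fm_transpose A = A"
    and trace_poly: "\<And>p. fm_trace n (fm_poly n A p) =
      poly p r + poly p s + of_nat a * poly p 2 + of_nat b * poly p (-1)"
    and r_gt_2: "r > 2"
    and s_lt_minus_1: "s < -1"
begin

definition annihilator :: "real poly" where
  "annihilator = [:-r, 1:] * [:-s, 1:] * [:-2, 1:] * [:1, 1:]"

lemma fm_transpose_poly_A: "fm_transpose (fm_poly n A p) = fm_poly n A p"
  by (rule fm_transpose_poly[OF supported symmetric])

lemma fm_poly_annihilator: "fm_poly n A annihilator = (\<lambda>i j. 0)"
proof (rule fm_trace_square_eq_0)
  show "fm_trace n (fm_mult n (fm_poly n A annihilator) (fm_poly n A annihilator)) = 0"
    unfolding fm_poly_mult[symmetric] trace_poly annihilator_def poly_mult by simp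
qed (simp_all add: fm_transpose_poly_A)

lemma fm_poly_eq_0_if_dvd: "annihilator dvd p \<Longrightarrow> fm_poly n A p = (\<lambda>i j. 0)"
  by (auto simp: dvd_def fm_poly_mult fm_poly_annihilator)

definition s_cofactor :: "real poly" where
  "s_cofactor = [:-r, 1:] * [:-2, 1:] * [:1, 1:]"

text \<open>\<open>proj\<close> is the orthogonal projection onto the \<open>s\<close>-eigenspace: it is \<open>A\<close> substituted
  into the interpolation polynomial that is \<open>1\<close> at \<open>s\<close> and \<open>0\<close> at \<open>r\<close>, \<open>2\<close> and \<open>-1\<close>.\<close>

definition proj :: fmat where
  "proj = fm_poly n A (Polynomial.smult (1 / poly s_cofactor s) s_cofactor)"

lemma poly_s_cofactor_s: "poly s_cofactor s \<noteq> 0"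
  unfolding s_cofactor_def poly_mult using r_gt_2 s_lt_minus_1 by simp

lemma annihilator_eq: "annihilator = s_cofactor * [:-s, 1:]"
  unfolding annihilator_def s_cofactor_def by (simp only: mult.assoc mult.commute mult.left_commute)

lemma proj_symmetric: "fm_transpose proj = proj"
  by (simp add: proj_def fm_transpose_poly_A)

lemma trace_proj: "fm_trace n proj = 1"
  using poly_s_cofactor_s unfolding proj_def trace_poly poly_smult by (simp add: s_cofactor_def)

lemma proj_idempotent: "fm_mult n proj proj = proj"
proof -
  define e where "e = Polynomial.smult (1 / poly s_cofactor s) s_cofactor"
  have "poly (e - 1) s = 0"
    using poly_s_cofactor_s by (simp add: e_def)
  then obtain g where g: "e - 1 = [:-s, 1:] * g"
    by (metis dvd_def dvd_iff_poly_eq_0 minus_minus)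
  have "e * e = e + e * (e - 1)"
    by (simp add: algebra_simps)
  also have "e * (e - 1) = e * ([:-s, 1:] * g)"
    by (simp only: g)
  also have "\<dots> = annihilator * Polynomial.smult (1 / poly s_cofactor s) g"
    unfolding e_def annihilator_eq by (simp only: mult_smult_left mult_smult_right mult.assoc)
  finally have "fm_poly n A (e * e) = fm_poly n A e"
    by (simp add: fm_poly_add fm_poly_smult fm_poly_mult fm_poly_annihilator)
  then show ?thesis
    by (simp add: proj_def fm_poly_mult flip: e_def)
qed

lemma A_mult_proj: "fm_mult n A proj = fm_smult s proj"
proof -
  have "[:-s, 1:] * Polynomial.smult (1 / poly s_cofactor s) s_cofactor
      = Polynomial.smult (1 / poly s_cofactor s) annihilator"
    unfolding annihilator_eq mult_smult_right by (simp only: mult.commute)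
  then have "fm_poly n A ([:-s, 1:] * Polynomial.smult (1 / poly s_cofactor s) s_cofactor) = (\<lambda>i j. 0)"
    by (intro fm_poly_eq_0_if_dvd) (simp add: dvd_smult)
  then have "fm_add (fm_smult (-s) (fm_mult n (fm_one n) proj)) (fm_mult n A proj) = (\<lambda>i j. 0)"
    unfolding fm_poly_mult fm_poly_linear[OF supported] proj_def
    by (simp add: fm_mult_add_left fm_mult_smult_left)
  then show ?thesis
    by (simp add: fm_one_mult proj_def fm_add_def fm_smult_def fun_eq_iff)
qed

text \<open>Modulo \<open>s_cofactor\<close>, \<open>x + 1\<close> is the sum of squares \<open>(r + 1) l\<^sub>r\<^sup>2 + 3 l\<^sub>2\<^sup>2\<close>,
  where \<open>l\<^sub>r, l\<^sub>2\<close> are the Lagrange basis polynomials of the nodes \<open>r, 2, -1\<close>.\<close>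

lemma fm_poly_s_cofactor: "fm_poly n A s_cofactor = fm_smult (poly s_cofactor s) proj"
  using poly_s_cofactor_s by (simp add: proj_def fm_poly_smult fm_smult_def)

lemma qform_nonneg_on_kernel_proj:
  assumes "fm_mult_vec n proj z = (\<lambda>i. 0)"
  shows "qform n (fm_add A (fm_one n)) z z \<ge> 0"
proof -
  define l1 where "l1 = Polynomial.smult (1 / ((r - 2) * (r + 1))) ([:-2, 1:] * [:1, 1:])"
  define l2 where "l2 = Polynomial.smult (1 / ((2 - r) * 3)) ([:-r, 1:] * [:1, 1:])"
  define D where "D = [:1, 1:] - Polynomial.smult (r + 1) (l1 * l1) - Polynomial.smult 3 (l2 * l2)"
  have "r * r \<noteq> r + 2"
    using r_gt_2 mult_strict_right_mono[of 2 r r] by linarith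
  moreover have "r - 2 \<noteq> 0" "r + 1 \<noteq> 0" "2 - r \<noteq> 0"
    using r_gt_2 by auto
  ultimately have "poly D r = 0" "poly D 2 = 0" "poly D (-1) = 0"
    unfolding D_def l1_def l2_def poly_diff poly_smult poly_mult by (simp_all add: field_simps)
  then have "s_cofactor dvd D"
    unfolding s_cofactor_def using r_gt_2 three_roots_dvd[of D r 2 "-1"] by simp
  then obtain q where "D = s_cofactor * q"
    by (elim dvdE)
  then have q: "[:1, 1:] = Polynomial.smult (r + 1) (l1 * l1) + Polynomial.smult 3 (l2 * l2)
      + q * s_cofactor"
    by (simp add: D_def algebra_simps)
  have "qform n (fm_add A (fm_one n)) z z = qform n (fm_poly n A [:1, 1:]) z z"
    by (simp add: fm_poly_linear supported qform_add)
  also have "\<dots> = (r + 1) * qform n (fm_mult n (fm_poly n A l1) (fm_poly n A l1)) z z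
      + 3 * qform n (fm_mult n (fm_poly n A l2) (fm_poly n A l2)) z z
      + poly s_cofactor s * qform n (fm_mult n (fm_poly n A q) proj) z z"
    by (subst q) (simp add: fm_poly_add fm_poly_smult fm_poly_mult qform_add qform_smult
        fm_poly_s_cofactor fm_mult_smult_right)
  also have "qform n (fm_mult n (fm_poly n A q) proj) z z = 0"
    unfolding qform_def fm_mult_vec_mult assms by (simp add: dot_def fm_mult_vec_def)
  finally show ?thesis
    using qform_square_nonneg[OF fm_transpose_poly_A, of n l1 z]
      qform_square_nonneg[OF fm_transpose_poly_A, of n l2 z] r_gt_2
    by simp
qed

lemma exists_negative_direction: "\<exists>w. qform n (fm_add A (fm_one n)) w w < 0"
proof -
  obtain j where j: "j < n" "proj j j \<noteq> 0"
  proof (rule ccontr)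
    assume "\<not> thesis"
    with that have "\<forall>j<n. proj j j = 0"
      by blast
    then have "fm_trace n proj = 0"
      by (simp add: fm_trace_def)
    with trace_proj show False
      by simp
  qed
  define w where "w = (\<lambda>i. proj i j)"
  have Aw: "fm_mult_vec n A w = (\<lambda>i. s * w i)"
  proof
    fix i
    show "fm_mult_vec n A w i = s * w i"
    proof (cases "i < n")
      case True
      with j(1) have "fm_mult_vec n A w i = fm_mult n A proj i j"
        by (simp add: fm_mult_vec_def fm_mult_def w_def)
      then show ?thesis
        by (simp add: A_mult_proj fm_smult_def w_def)
    next
      case False
      then show ?thesis
        using fm_supported_poly[of n A] by (simp add: fm_mult_vec_def w_def proj_def fm_supported_def)
    qed
  qed
  have "qform n (fm_add A (fm_one n)) w w = (s + 1) * dot n w w"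
    unfolding qform_add qform_one unfolding qform_def Aw
    by (simp add: dot_def sum_distrib_left algebra_simps)
  moreover have "dot n w w > 0"
  proof -
    have "w j * w j \<le> dot n w w"
      unfolding dot_def using j(1) by (intro member_le_sum) auto
    moreover have "w j * w j > 0"
      using j(2) by (auto simp: w_def zero_less_mult_iff linorder_neq_iff)
    ultimately show ?thesis
      by linarith
  qed
  ultimately have "qform n (fm_add A (fm_one n)) w w < 0"
    using s_lt_minus_1 by (simp add: mult_neg_pos)
  then show ?thesis
    by blast
qed

theorem negative_index_one_A_plus_I: "negative_index_one n (fm_add A (fm_one n))"
  unfolding negative_index_one_def
proof (intro conjI allI impI exists_negative_direction)
  fix x y
  assume "qform n (fm_add A (fm_one n)) x x < 0" "qform n (fm_add A (fm_one n)) y y < 0"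
  then show "qform n (fm_add A (fm_one n)) x y \<noteq> 0"
    using no_orthogonal_negative_pair[OF _ fm_idempotent_trace_one_minors[OF proj_symmetric
        proj_idempotent trace_proj] qform_nonneg_on_kernel_proj]
    by (simp add: fm_transpose_add symmetric fm_transpose_one)
qed

end

section \<open>The quadratic form of a graph\<close>

definition graph_matrix :: "nat \<Rightarrow> (nat \<Rightarrow> nat \<Rightarrow> bool) \<Rightarrow> fmat" where
  "graph_matrix n E = fm_add (fm_of_mat n (adj_mat n E)) (fm_one n)"

lemma simple_graph_sym: "simple_graph n E \<Longrightarrow> i < n \<Longrightarrow> j < n \<Longrightarrow> E i j = E j i"
  and simple_graph_irrefl: "simple_graph n E \<Longrightarrow> i < n \<Longrightarrow> \<not> E i i"
  unfolding simple_graph_def by blast+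

lemma in_F_F_spectrum:
  assumes "in_F n E"
  shows "\<exists>r s a b. F_spectrum n (fm_of_mat n (adj_mat n E)) r s a b"
proof -
  from assms obtain r s :: real and a b :: nat where sg: "simple_graph n E" and "r > 2" "s < -1"
    and cp: "char_poly (adj_mat n E) = [:-r, 1:] * [:-s, 1:] * [:-2, 1:] ^ a * [:1, 1:] ^ b"
    unfolding in_F_def by blast
  define es where "es = r # s # replicate a 2 @ replicate b (-1 :: real)"
  have carrier: "adj_mat n E \<in> carrier_mat n n"
    by (simp add: adj_mat_def)
  have cp_es: "char_poly (adj_mat n E) = (\<Prod>e\<leftarrow>es. [:-e, 1:])"
    unfolding cp es_def
    by (simp only: list.map map_append map_replicate prod_list.Cons prod_list.append
        prod_list_replicate minus_minus mult.assoc)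
  have "fm_trace n (fm_poly n (fm_of_mat n (adj_mat n E)) p) =
      poly p r + poly p s + of_nat a * poly p 2 + of_nat b * poly p (-1)" for p
    using fm_trace_poly_char_poly[OF carrier cp_es] by (simp add: es_def sum_list_replicate)
  moreover have "fm_transpose (fm_of_mat n (adj_mat n E)) = fm_of_mat n (adj_mat n E)"
    using sg by (auto simp: fm_transpose_def fm_of_mat_def adj_mat_def simple_graph_def fun_eq_iff)
  ultimately show ?thesis
    using \<open>r > 2\<close> \<open>s < -1\<close> by (auto simp: F_spectrum_def)
qed

theorem in_F_negative_index_one: "in_F n E \<Longrightarrow> negative_index_one n (graph_matrix n E)"
  using in_F_F_spectrum F_spectrum.negative_index_one_A_plus_I unfolding graph_matrix_def by blast

lemma qform_graph_matrix:
  "qform n (graph_matrix n E) x y = (\<Sum>i<n. \<Sum>j<n. x i * y j * (of_bool (E i j) + of_bool (i = j)))"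
  by (auto simp: qform_def dot_def fm_mult_vec_def graph_matrix_def fm_add_def fm_of_mat_def
      adj_mat_def fm_one_def of_bool_def sum_distrib_left algebra_simps intro!: sum.cong)

lemma qform_graph_matrix_supported:
  assumes S: "S \<subseteq> {..<n}" and x: "\<And>i. i \<notin> S \<Longrightarrow> x i = 0" and y: "\<And>i. i \<notin> S \<Longrightarrow> y i = 0"
  shows "qform n (graph_matrix n E) x y = (\<Sum>i\<in>S. \<Sum>j\<in>S. x i * y j * (of_bool (E i j) + of_bool (i = j)))"
proof -
  have "finite S"
    using S finite_subset by blast
  have "qform n (graph_matrix n E) x y = (\<Sum>i\<in>S. \<Sum>j<n. x i * y j * (of_bool (E i j) + of_bool (i = j)))"
    unfolding qform_graph_matrix by (rule sum.mono_neutral_right) (use S x \<open>finite S\<close> in auto)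
  also have "\<dots> = (\<Sum>i\<in>S. \<Sum>j\<in>S. x i * y j * (of_bool (E i j) + of_bool (i = j)))"
    by (intro sum.cong refl sum.mono_neutral_right) (use S y \<open>finite S\<close> in auto)
  finally show ?thesis .
qed

lemma qform_graph_matrix_five:
  assumes sg: "simple_graph n E" and d: "distinct [v, w, p, q, t]" and V: "{v, w, p, q, t} \<subseteq> {..<n}"
    and x: "\<And>i. i \<notin> {v, w, p, q, t} \<Longrightarrow> x i = 0" and y: "\<And>i. i \<notin> {v, w, p, q, t} \<Longrightarrow> y i = 0"
  shows "qform n (graph_matrix n E) x y = x v * y v + x w * y w + x p * y p + x q * y q + x t * y t
     + of_bool (E v w) * (x v * y w + x w * y v) + of_bool (E v p) * (x v * y p + x p * y v)
     + of_bool (E v q) * (x v * y q + x q * y v) + of_bool (E v t) * (x v * y t + x t * y v)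
     + of_bool (E w p) * (x w * y p + x p * y w) + of_bool (E w q) * (x w * y q + x q * y w)
     + of_bool (E w t) * (x w * y t + x t * y w) + of_bool (E p q) * (x p * y q + x q * y p)
     + of_bool (E p t) * (x p * y t + x t * y p) + of_bool (E q t) * (x q * y t + x t * y q)"
proof -
  have sym: "E w v = E v w" "E p v = E v p" "E q v = E v q" "E t v = E v t" "E p w = E w p"
    "E q w = E w q" "E t w = E w t" "E q p = E p q" "E t p = E p t" "E t q = E q t"
    using V simple_graph_sym[OF sg] by auto
  have irrefl: "\<not> E v v" "\<not> E w w" "\<not> E p p" "\<not> E q q" "\<not> E t t"
    using V simple_graph_irrefl[OF sg] by auto
  have neq: "w \<noteq> v" "p \<noteq> v" "q \<noteq> v" "t \<noteq> v" "p \<noteq> w" "q \<noteq> w" "t \<noteq> w" "q \<noteq> p"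
    "t \<noteq> p" "t \<noteq> q"
    using d by auto
  have "qform n (graph_matrix n E) x y = (\<Sum>i\<in>{v, w, p, q, t}. \<Sum>j\<in>{v, w, p, q, t}.
      x i * y j * (of_bool (E i j) + of_bool (i = j)))"
    by (rule qform_graph_matrix_supported) (use V x y in auto)
  then show ?thesis
    using d neq by (simp add: sym irrefl algebra_simps split del: split_of_bool)
qed

section \<open>Neighbourhoods of outside vertices in a clique\<close>

text \<open>In each of the following configurations, a triangle \<open>p q t\<close> and two further vertices \<open>v w\<close>,
  the vectors \<open>x\<close> and \<open>y\<close> are negative and orthogonal for \<open>A + I\<close>, whatever the edge \<open>v w\<close>.\<close>

lemma forbidden_crossing:
  assumes neg: "negative_index_one n (graph_matrix n E)" and sg: "simple_graph n E"
    and d: "distinct [v, w, p, q, t]" and V: "{v, w, p, q, t} \<subseteq> {..<n}"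
    and adj: "E p q" "E p t" "E q t" "E v p" "E v q" "\<not> E v t" "E w p" "E w t" "\<not> E w q"
  shows False
proof -
  define x :: "nat \<Rightarrow> real" where "x = (\<lambda>_. 0)(v := -1, w := -1, p := 2, q := -1)"
  define y :: "nat \<Rightarrow> real" where "y = (\<lambda>_. 0)(v := -1, w := 1, p := 1, t := -2)"
  have supp: "x i = 0" "y i = 0" if "i \<notin> {v, w, p, q, t}" for i
    using that by (simp_all add: x_def y_def)
  have vals: "x v = -1" "x w = -1" "x p = 2" "x q = -1" "x t = 0"
    "y v = -1" "y w = 1" "y p = 1" "y q = 0" "y t = -2"
    using d by (auto simp: x_def y_def)
  note five = qform_graph_matrix_five[OF sg d V]
  have "qform n (graph_matrix n E) x x < 0" "qform n (graph_matrix n E) y y < 0"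
    "qform n (graph_matrix n E) x y = 0"
    using five[of x x] five[of y y] five[of x y] supp by (cases "E v w"; simp add: adj vals)+
  with neg show False
    unfolding negative_index_one_def by blast
qed

lemma forbidden_nested:
  assumes neg: "negative_index_one n (graph_matrix n E)" and sg: "simple_graph n E"
    and d: "distinct [v, w, p, q, t]" and V: "{v, w, p, q, t} \<subseteq> {..<n}"
    and adj: "E p q" "E p t" "E q t" "E v p" "E v q" "\<not> E v t" "E w p" "\<not> E w t" "\<not> E w q"
  shows False
proof -
  define x :: "nat \<Rightarrow> real" where "x = (\<lambda>_. 0)(v := -1, w := -1, p := 1, q := 1, t := -1)"
  define y :: "nat \<Rightarrow> real" where "y = (\<lambda>_. 0)(v := -1, w := 1, p := -1, q := 2)"
  have supp: "x i = 0" "y i = 0" if "i \<notin> {v, w, p, q, t}" for i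
    using that by (simp_all add: x_def y_def)
  have vals: "x v = -1" "x w = -1" "x p = 1" "x q = 1" "x t = -1"
    "y v = -1" "y w = 1" "y p = -1" "y q = 2" "y t = 0"
    using d by (auto simp: x_def y_def)
  note five = qform_graph_matrix_five[OF sg d V]
  have "qform n (graph_matrix n E) x x < 0" "qform n (graph_matrix n E) y y < 0"
    "qform n (graph_matrix n E) x y = 0"
    using five[of x x] five[of y y] five[of x y] supp by (cases "E v w"; simp add: adj vals)+
  with neg show False
    unfolding negative_index_one_def by blast
qed

lemma forbidden_disjoint:
  assumes neg: "negative_index_one n (graph_matrix n E)" and sg: "simple_graph n E"
    and d: "distinct [v, w, p, q, t]" and V: "{v, w, p, q, t} \<subseteq> {..<n}"
    and adj: "E p q" "E p t" "E q t" "E v p" "\<not> E v q" "\<not> E v t" "\<not> E w p" "\<not> E w t" "E w q"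
  shows False
proof -
  define x :: "nat \<Rightarrow> real" where "x = (\<lambda>_. 0)(v := -1, w := -1, p := 1, q := 2, t := -2)"
  define y :: "nat \<Rightarrow> real" where "y = (\<lambda>_. 0)(v := -1, w := 1, p := 1, q := -1, t := -1)"
  have supp: "x i = 0" "y i = 0" if "i \<notin> {v, w, p, q, t}" for i
    using that by (simp_all add: x_def y_def)
  have vals: "x v = -1" "x w = -1" "x p = 1" "x q = 2" "x t = -2"
    "y v = -1" "y w = 1" "y p = 1" "y q = -1" "y t = -1"
    using d by (auto simp: x_def y_def)
  note five = qform_graph_matrix_five[OF sg d V]
  have "qform n (graph_matrix n E) x x < 0" "qform n (graph_matrix n E) y y < 0"
    "qform n (graph_matrix n E) x y = 0"
    using five[of x x] five[of y y] five[of x y] supp by (cases "E v w"; simp add: adj vals)+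
  with neg show False
    unfolding negative_index_one_def by blast
qed

lemma neighbourhoods_complementary:
  assumes neg: "negative_index_one n (graph_matrix n E)" and sg: "simple_graph n E"
    and C: "is_clique n E C"
    and v: "v \<in> {0..<n} - C" and w: "w \<in> {0..<n} - C"
    and ne: "{u\<in>C. E v u} \<noteq> {}" "{u\<in>C. E w u} \<noteq> {}"
    and proper: "{u\<in>C. E v u} \<noteq> C" "{u\<in>C. E w u} \<noteq> C"
    and neq: "{u\<in>C. E v u} \<noteq> {u\<in>C. E w u}"
  shows "{u\<in>C. E v u} \<inter> {u\<in>C. E w u} = {} \<and> {u\<in>C. E v u} \<union> {u\<in>C. E w u} = C"
proof -
  have in_C: "u \<in> C \<Longrightarrow> u < n" for u
    using C unfolding is_clique_def by auto
  have clique_edge: "E u u'" if "u \<in> C" "u' \<in> C" "u \<noteq> u'" for u u'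
    using C that unfolding is_clique_def by auto
  have crossing_or_nested: False
    if pq: "p \<in> C" "E v p" "E w p" "q \<in> C" "E v q" "\<not> E w q"
      and vw: "v \<in> {0..<n} - C" "w \<in> {0..<n} - C" and proper_v: "{u\<in>C. E v u} \<noteq> C"
    for v w p q
  proof (cases "\<exists>t\<in>C. E w t \<and> \<not> E v t")
    case True
    then obtain t where t: "t \<in> C" "E w t" "\<not> E v t"
      by blast
    show False
      by (rule forbidden_crossing[OF neg sg, of v w p q t]) (use pq vw t in_C in \<open>auto intro: clique_edge\<close>)
  next
    case False
    obtain t where t: "t \<in> C" "\<not> E v t"
      using proper_v by blast
    show False
      by (rule forbidden_nested[OF neg sg, of v w p q t]) (use pq vw t False in_C in \<open>auto intro: clique_edge\<close>)
  qed
  show ?thesis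
  proof (rule ccontr)
    assume not_compl: "\<not> ?thesis"
    show False
    proof (cases "\<exists>p\<in>C. E v p \<and> E w p")
      case True
      then obtain p where p: "p \<in> C" "E v p" "E w p"
        by blast
      from neq obtain q where "q \<in> C" "E v q \<and> \<not> E w q \<or> E w q \<and> \<not> E v q"
        by blast
      then show False
        using crossing_or_nested[OF p _ _ _ v w proper(1)]
          crossing_or_nested[OF p(1,3,2) _ _ _ w v proper(2)] by blast
    next
      case False
      with not_compl obtain t where t: "t \<in> C" "\<not> E v t" "\<not> E w t"
        by blast
      obtain p q where "p \<in> C" "E v p" "q \<in> C" "E w q"
        using ne by blast
      with False t show False
        by (intro forbidden_disjoint[OF neg sg, of v w p q t]) (use v w in_C in \<open>auto intro: clique_edge\<close>)
    qed
  qed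
qed

lemma max_clique_neighbourhood_proper:
  assumes sg: "simple_graph n E" and C: "is_max_clique n E C" and v: "v \<in> {0..<n} - C"
  shows "{u\<in>C. E v u} \<noteq> C"
proof
  assume all: "{u\<in>C. E v u} = C"
  have "is_clique n E (insert v C)"
    using C v all simple_graph_sym[OF sg, of v] unfolding is_max_clique_def is_clique_def
    by (auto simp: subset_iff)
  moreover have "finite C"
    using C finite_subset unfolding is_max_clique_def is_clique_def by auto
  ultimately show False
    using C v unfolding is_max_clique_def by (metis DiffD2 card_insert_disjoint not_less_eq_eq order_refl)
qed

text \<open>Otherwise connectivity forces the graph to be complete, and then \<open>A + I\<close> is the all-ones
  matrix, which has no negative direction.\<close>

lemma exists_outside_neighbour:
  assumes neg: "negative_index_one n (graph_matrix n E)" and sg: "simple_graph n E"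
    and conn: "connected_graph n E" and C: "is_clique n E C" and c: "c \<in> C"
  shows "\<exists>v\<in>{0..<n} - C. {u\<in>C. E v u} \<noteq> {}"
proof (rule ccontr)
  assume none: "\<not> ?thesis"
  have all_in_C: "u \<in> C" if "u < n" for u
  proof -
    have "(\<lambda>x y. x < n \<and> y < n \<and> E x y)\<^sup>*\<^sup>* c u"
      using conn c C that unfolding connected_graph_def is_clique_def by auto
    then show ?thesis
    proof (induct rule: rtranclp_induct)
      case (step y z)
      then show ?case
        using none simple_graph_sym[OF sg, of y z] by auto
    qed (rule c)
  qed
  have "qform n (graph_matrix n E) w w = (\<Sum>i<n. w i)\<^sup>2" for w
  proof -
    have "qform n (graph_matrix n E) w w = (\<Sum>i<n. \<Sum>j<n. w i * w j)"
      using C all_in_C simple_graph_irrefl[OF sg] unfolding qform_graph_matrix is_clique_def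
      by (auto intro!: sum.cong)
    then show ?thesis
      by (simp add: power2_eq_square sum_product)
  qed
  with neg show False
    unfolding negative_index_one_def by (metis zero_le_power2 not_less)
qed

theorem lemma4p1:
  fixes n :: nat and E :: "nat \<Rightarrow> nat \<Rightarrow> bool" and C :: "nat set"
  assumes "in_F n E"
    and "is_max_clique n E C"
    and "\<forall>D. is_max_clique n E D \<longrightarrow> boundary_edges n E C \<le> boundary_edges n E D"
  shows "\<exists>X Y. X \<noteq> {} \<and> Y \<noteq> {} \<and> X \<inter> Y = {} \<and> X \<union> Y = C \<and>
           (\<forall>v\<in>{0..<n} - C. {u\<in>C. E v u} = X \<or> {u\<in>C. E v u} = Y \<or> {u\<in>C. E v u} = {})"
proof -
  have sg: "simple_graph n E" and conn: "connected_graph n E"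
    using assms(1) by (auto simp: in_F_def)
  have neg: "negative_index_one n (graph_matrix n E)"
    using assms(1) by (rule in_F_negative_index_one)
  have C: "is_clique n E C"
    using assms(2) by (simp add: is_max_clique_def)
  have "is_clique n E {0}"
    using conn by (simp add: is_clique_def connected_graph_def)
  then have "card C \<ge> 1"
    using assms(2) unfolding is_max_clique_def by fastforce
  then obtain c where "c \<in> C"
    by (metis card.empty ex_in_conv not_one_le_zero)
  then obtain v0 where v0: "v0 \<in> {0..<n} - C" "{u\<in>C. E v0 u} \<noteq> {}"
    using exists_outside_neighbour[OF neg sg conn C] by blast
  define X where "X = {u\<in>C. E v0 u}"
  have other: "{u\<in>C. E v u} = C - X"
    if "v \<in> {0..<n} - C" "{u\<in>C. E v u} \<noteq> {}" "{u\<in>C. E v u} \<noteq> X" for v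
    using neighbourhoods_complementary[OF neg sg C that(1) v0(1) that(2) v0(2)
        max_clique_neighbourhood_proper[OF sg assms(2) that(1)]
        max_clique_neighbourhood_proper[OF sg assms(2) v0(1)]] that(3)
    unfolding X_def by blast
  have "X \<noteq> {}" "C - X \<noteq> {}" "X \<subseteq> C"
    using v0 max_clique_neighbourhood_proper[OF sg assms(2) v0(1)] by (auto simp: X_def)
  with other show ?thesis
    by (intro exI[of _ X] exI[of _ "C - X"]) blast
qed

end
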